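(* Let $f:I\to\mathbb{R}$ and $g:J\to\mathbb{R}$ be smooth functions on open intervals $I,J\subset\mathbb{R}$, and let $S$ be the translation surface $z=f(x)+g(y)$, $(x,y)\in I\times J$. Let $\phi(x,y,z)=\alpha x+\beta y+\gamma z$ with $\alpha,\beta,\gamma\in\mathbb{R}$ not all zero. If $S$ is $\phi$-minimal, then $f$ or $g$ is an affine function (i.e. $f''\equiv0$ or $g''\equiv0$); consequently $S$ is a cylindrical surface whose rulings are parallel to the $xz$-plane or to the $yz$-plane.
   Context: For a smooth oriented surface with unit normal $N$, $H$ is the mean curvature normalized so that $\Delta_S X=2HN$. The $\phi$-mean curvature is $H_\phi=H-\tfrac12\langle N,(\alpha,\beta,\gamma)\rangle$ and $S$ is $\phi$-minimal if $H_\phi\equiv0$. For the graph $z=f(x)+g(y)$ this condition is equivalent to $(1+g'^2)f''+(1+f'^2)g''=(1+f'^2+g'^2)(-\alpha f'-\beta g'+\gamma)$. *)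

theory Defs
  imports "HOL-Analysis.Analysis"
begin

definition smooth_on :: "real set \<Rightarrow> (real \<Rightarrow> real) \<Rightarrow> bool" where
  "smooth_on I f \<longleftrightarrow> (\<forall>n. \<forall>x\<in>I. ((deriv ^^ n) f) differentiable (at x))"

definition pd_x :: "(real \<Rightarrow> real \<Rightarrow> real) \<Rightarrow> real \<Rightarrow> real \<Rightarrow> real" where
  "pd_x h x y = deriv (\<lambda>s. h s y) x"
definition pd_y :: "(real \<Rightarrow> real \<Rightarrow> real) \<Rightarrow> real \<Rightarrow> real \<Rightarrow> real" where
  "pd_y h x y = deriv (\<lambda>t. h x t) y"

definition graph_normal :: "(real \<Rightarrow> real \<Rightarrow> real) \<Rightarrow> real \<Rightarrow> real \<Rightarrow> real \<times> real \<times> real" where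
  "graph_normal h x y =
     (let W = sqrt (1 + (pd_x h x y)\<^sup>2 + (pd_y h x y)\<^sup>2)
      in (- pd_x h x y / W, - pd_y h x y / W, 1 / W))"

text \<open>Mean curvature of the graph z = h(x,y) w.r.t. the upward normal N,
  normalised so that the Laplacian of the position vector equals 2 H N.\<close>
definition graph_mean_curvature :: "(real \<Rightarrow> real \<Rightarrow> real) \<Rightarrow> real \<Rightarrow> real \<Rightarrow> real" where
  "graph_mean_curvature h x y =
     (let hx = pd_x h x y; hy = pd_y h x y;
          hxx = pd_x (pd_x h) x y; hyy = pd_y (pd_y h) x y; hxy = pd_y (pd_x h) x y;
          W = sqrt (1 + hx\<^sup>2 + hy\<^sup>2)
      in ((1 + hy\<^sup>2) * hxx - 2 * hx * hy * hxy + (1 + hx\<^sup>2) * hyy) / (2 * W ^ 3))"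

definition graph_phi_mean_curvature ::
  "real \<Rightarrow> real \<Rightarrow> real \<Rightarrow> (real \<Rightarrow> real \<Rightarrow> real) \<Rightarrow> real \<Rightarrow> real \<Rightarrow> real" where
  "graph_phi_mean_curvature \<alpha> \<beta> \<gamma> h x y =
     (case graph_normal h x y of (n1, n2, n3) \<Rightarrow>
        graph_mean_curvature h x y - (1/2) * (\<alpha> * n1 + \<beta> * n2 + \<gamma> * n3))"

definition graph_phi_minimal ::
  "real \<Rightarrow> real \<Rightarrow> real \<Rightarrow> (real \<Rightarrow> real \<Rightarrow> real) \<Rightarrow> (real \<times> real) set \<Rightarrow> bool" where
  "graph_phi_minimal \<alpha> \<beta> \<gamma> h U \<longleftrightarrow> (\<forall>(x, y)\<in>U. graph_phi_mean_curvature \<alpha> \<beta> \<gamma> h x y = 0)"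

end

theory Submission
  imports Defs "HOL-Computational_Algebra.Polynomial"
begin

(* For the translation graph z = f(x) + g(y) the phi-minimality condition
   becomes, with p = f'(x), a = f''(x), q = g'(y), b = g''(y), the identity
     (1 + q^2) a + (1 + p^2) b = (1 + p^2 + q^2) (gamma - alpha p - beta q)
   holding for all x in I and y in J.  If neither f nor g is affine, then f' and g'
   take infinitely many values (a continuous derivative with finitely many values on
   an interval is constant).  The identity is then a separation of variables that is
   too rigid: comparing two values of y with distinct q^2 shows that a is a quadratic
   polynomial in p; substituting back gives a cubic in p vanishing on infinitely many
   points, whose coefficients force alpha = 0 and two relations in q and b; their
   difference is a cubic in q vanishing on infinitely many points, forcing
   beta = gamma = 0.  This contradicts (alpha, beta, gamma) <> 0.
   The file first derives the identity from the definitions, then proves the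
   analytic fact about derivatives, then the algebraic separation argument, and
   finally combines them. *)

definition translation_phi_eq :: "real \<Rightarrow> real \<Rightarrow> real \<Rightarrow> real \<Rightarrow> real \<Rightarrow> real \<Rightarrow> real \<Rightarrow> bool" where
  "translation_phi_eq \<alpha> \<beta> \<gamma> p a q b \<longleftrightarrow>
     (1 + q\<^sup>2) * a + (1 + p\<^sup>2) * b = (1 + p\<^sup>2 + q\<^sup>2) * (\<gamma> - \<alpha> * p - \<beta> * q)"

lemma deriv_add_const: "deriv (\<lambda>s. f s + (c::real)) = deriv f"
  unfolding deriv_def has_field_derivative_iff by simp

text \<open>No regularity is needed, since the partial derivatives of
  f(x) + g(y) are deriv f and deriv g by definition of deriv.\<close>
lemma translation_phi_mean_curvature_eq_0_iff:
  fixes f g :: "real \<Rightarrow> real"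
  shows "graph_phi_mean_curvature \<alpha> \<beta> \<gamma> (\<lambda>x y. f x + g y) x y = 0 \<longleftrightarrow>
         translation_phi_eq \<alpha> \<beta> \<gamma> (deriv f x) (deriv (deriv f) x) (deriv g y) (deriv (deriv g) y)"
proof -
  define h where "h = (\<lambda>x y. f x + g y)"
  have hx: "pd_x h = (\<lambda>x y. deriv f x)"
    by (intro ext) (simp add: pd_x_def h_def deriv_add_const)
  have hy: "pd_y h = (\<lambda>x y. deriv g y)"
    by (intro ext) (simp add: pd_y_def h_def deriv_add_const[of g, simplified add.commute] add.commute)
  define p q a b where "p = deriv f x" "q = deriv g y"
    "a = deriv (deriv f) x" "b = deriv (deriv g) y"
  define W where "W = sqrt (1 + p\<^sup>2 + q\<^sup>2)"
  have W_pos: "W > 0" unfolding W_def by (intro real_sqrt_gt_zero add_pos_nonneg) simp_all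
  have W_sq: "W\<^sup>2 = 1 + p\<^sup>2 + q\<^sup>2" unfolding W_def by simp
  have "graph_phi_mean_curvature \<alpha> \<beta> \<gamma> h x y
      = ((1 + q\<^sup>2) * a + (1 + p\<^sup>2) * b) / (2 * W ^ 3)
        - (1/2) * (\<alpha> * (- p / W) + \<beta> * (- q / W) + \<gamma> * (1 / W))"
    unfolding graph_phi_mean_curvature_def graph_normal_def graph_mean_curvature_def
    by (simp add: hx hy p_q_a_b_def W_def Let_def pd_x_def pd_y_def)
  also have "\<dots> = ((1 + q\<^sup>2) * a + (1 + p\<^sup>2) * b - W\<^sup>2 * (\<gamma> - \<alpha> * p - \<beta> * q)) / (2 * W ^ 3)"
    using W_pos by (simp add: field_simps power2_eq_square power3_eq_cube)
  finally show ?thesis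
    using W_pos W_sq by (simp add: h_def p_q_a_b_def translation_phi_eq_def)
qed

text \<open>Smoothness is used only through the first derivative being a continuous derivative.\<close>
lemma smooth_on_imp_C1:
  assumes "smooth_on I f"
  shows "\<forall>x\<in>I. (f has_real_derivative deriv f x) (at x)" and "continuous_on I (deriv f)"
proof -
  have diff: "\<And>n x. x \<in> I \<Longrightarrow> ((deriv ^^ n) f) differentiable (at x)"
    using assms unfolding smooth_on_def by blast
  show "\<forall>x\<in>I. (f has_real_derivative deriv f x) (at x)"
    using diff[of _ 0] by (simp add: DERIV_deriv_iff_real_differentiable)
  show "continuous_on I (deriv f)"
    using diff[of _ 1] by (simp add: continuous_at_imp_continuous_on differentiable_imp_continuous_within)
qed

text \<open>A continuous derivative on an open interval that takes only finitely many values
  is constant (its image is connected), so the function is affine.\<close>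
lemma finite_deriv_image_imp_affine:
  fixes f :: "real \<Rightarrow> real"
  assumes "open I" "is_interval I"
    and deriv: "\<forall>x\<in>I. (f has_real_derivative deriv f x) (at x)"
    and cont: "continuous_on I (deriv f)"
    and fin: "finite (deriv f ` I)"
  shows "\<exists>a b. \<forall>x\<in>I. f x = a * x + b"
proof -
  have "connected (deriv f ` I)"
    using connected_continuous_image[OF cont] assms(2) is_interval_connected by blast
  with fin obtain k where k: "\<forall>x\<in>I. deriv f x = k"
    using connected_finite_iff_sing by (metis empty_iff image_eqI singletonD)
  have "\<forall>x\<in>I - {}. ((\<lambda>x. f x - k * x) has_real_derivative 0) (at x)"
    using deriv k by (auto intro!: derivative_eq_intros)
  moreover have "continuous_on I (\<lambda>x. f x - k * x)"
    using deriv by (intro continuous_intros) (meson DERIV_isCont continuous_at_imp_continuous_on)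
  ultimately obtain c where "\<And>x. x \<in> I \<Longrightarrow> f x - k * x = c"
    using DERIV_zero_connected_constant[of I "{}"] assms(1,2) is_interval_connected by blast
  then show ?thesis by (metis diff_eq_eq add.commute)
qed

lemma cubic_vanishing_on_infinite_set:
  fixes S :: "real set"
  assumes "infinite S" "\<forall>x\<in>S. c0 + c1 * x + c2 * x\<^sup>2 + c3 * x ^ 3 = 0"
  shows "c0 = 0 \<and> c1 = 0 \<and> c2 = 0 \<and> c3 = 0"
proof -
  define P where "P = [:c0, c1, c2, c3:]"
  have "poly P x = c0 + c1 * x + c2 * x\<^sup>2 + c3 * x ^ 3" for x
    by (simp add: P_def algebra_simps power2_eq_square power3_eq_cube)
  then have "S \<subseteq> {x. poly P x = 0}" using assms(2) by auto
  then have "P = 0" using assms(1) poly_roots_finite finite_subset by blast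
  then show ?thesis by (simp add: P_def)
qed

lemma infinite_image_distinct_squares:
  fixes q :: "'a \<Rightarrow> real"
  assumes "infinite (q ` Y)"
  obtains y1 y2 where "y1 \<in> Y" "y2 \<in> Y" "(q y1)\<^sup>2 \<noteq> (q y2)\<^sup>2"
proof -
  obtain y1 where y1: "y1 \<in> Y" using assms by fastforce
  have "\<not> q ` Y \<subseteq> {q y1, - q y1}" using assms finite_subset by blast
  then obtain y2 where "y2 \<in> Y" "q y2 \<notin> {q y1, - q y1}" by blast
  then have "(q y1)\<^sup>2 \<noteq> (q y2)\<^sup>2" by (auto simp: power2_eq_iff)
  with y1 \<open>y2 \<in> Y\<close> that show ?thesis by blast
qed

text \<open>Eliminating b between the equations at two values q1, q2 with distinct squares shows
  that the second derivative a is a quadratic polynomial in p with linear coefficient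
  minus alpha.\<close>
lemma translation_phi_eq_quadratic:
  assumes eq1: "\<forall>x\<in>X. translation_phi_eq \<alpha> \<beta> \<gamma> (p x) (a x) q1 b1"
    and eq2: "\<forall>x\<in>X. translation_phi_eq \<alpha> \<beta> \<gamma> (p x) (a x) q2 b2"
    and distinct: "q1\<^sup>2 \<noteq> q2\<^sup>2"
  shows "\<exists>c0 c2. \<forall>x\<in>X. a x = c0 - \<alpha> * p x + c2 * (p x)\<^sup>2"
proof -
  define d where "d = q1\<^sup>2 - q2\<^sup>2"
  have d: "d \<noteq> 0" using distinct by (simp add: d_def)
  define C0 where "C0 = (1 + q1\<^sup>2) * (\<gamma> - \<beta> * q1) - (1 + q2\<^sup>2) * (\<gamma> - \<beta> * q2) - (b1 - b2)"
  define C2 where "C2 = - \<beta> * (q1 - q2) - (b1 - b2)"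
  have "a x = C0 / d - \<alpha> * p x + C2 / d * (p x)\<^sup>2" if "x \<in> X" for x
  proof -
    have e1: "(1 + q1\<^sup>2) * a x + (1 + (p x)\<^sup>2) * b1
              = (1 + (p x)\<^sup>2 + q1\<^sup>2) * (\<gamma> - \<alpha> * p x - \<beta> * q1)"
      and e2: "(1 + q2\<^sup>2) * a x + (1 + (p x)\<^sup>2) * b2
              = (1 + (p x)\<^sup>2 + q2\<^sup>2) * (\<gamma> - \<alpha> * p x - \<beta> * q2)"
      using eq1 eq2 that by (auto simp: translation_phi_eq_def)
    have "d * a x = ((1 + q1\<^sup>2) * a x + (1 + (p x)\<^sup>2) * b1)
                    - ((1 + q2\<^sup>2) * a x + (1 + (p x)\<^sup>2) * b2) - (1 + (p x)\<^sup>2) * (b1 - b2)"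
      by (simp add: d_def algebra_simps)
    also have "\<dots> = (1 + (p x)\<^sup>2 + q1\<^sup>2) * (\<gamma> - \<alpha> * p x - \<beta> * q1)
                    - (1 + (p x)\<^sup>2 + q2\<^sup>2) * (\<gamma> - \<alpha> * p x - \<beta> * q2) - (1 + (p x)\<^sup>2) * (b1 - b2)"
      by (simp only: e1 e2)
    also have "\<dots> = C0 - \<alpha> * p x * d + C2 * (p x)\<^sup>2"
      by (simp add: C0_def C2_def d_def algebra_simps power2_eq_square)
    finally have "a x = (C0 - \<alpha> * p x * d + C2 * (p x)\<^sup>2) / d"
      using d by (simp add: eq_divide_eq mult.commute)
    then show ?thesis using d by (simp add: add_divide_distrib diff_divide_distrib)
  qed
  then show ?thesis by blast
qed

text \<open>Substituting the quadratic form of a back into the equation at a fixed y gives a cubic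
  in p; if p takes infinitely many values its coefficients vanish: alpha = 0 and two
  relations between q and b.\<close>
lemma translation_phi_eq_coefficients:
  assumes eq: "\<forall>x\<in>X. translation_phi_eq \<alpha> \<beta> \<gamma> (p x) (c0 - \<alpha> * p x + c2 * (p x)\<^sup>2) q b"
    and inf: "infinite (p ` X)"
  shows "\<alpha> = 0" and "(1 + q\<^sup>2) * c2 + b = \<gamma> - \<beta> * q"
    and "(1 + q\<^sup>2) * c0 + b = (1 + q\<^sup>2) * (\<gamma> - \<beta> * q)"
proof -
  have "\<forall>s\<in>p ` X. ((1 + q\<^sup>2) * c0 + b - (1 + q\<^sup>2) * (\<gamma> - \<beta> * q)) + 0 * s
      + ((1 + q\<^sup>2) * c2 + b - (\<gamma> - \<beta> * q)) * s\<^sup>2 + \<alpha> * s ^ 3 = 0"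
    using eq unfolding translation_phi_eq_def
    by (auto simp: algebra_simps power2_eq_square power3_eq_cube)
  from cubic_vanishing_on_infinite_set[OF inf this]
  show "\<alpha> = 0" "(1 + q\<^sup>2) * c2 + b = \<gamma> - \<beta> * q"
    "(1 + q\<^sup>2) * c0 + b = (1 + q\<^sup>2) * (\<gamma> - \<beta> * q)" by auto
qed

lemma translation_phi_eq_separated:
  assumes eq: "\<forall>x\<in>X. \<forall>y\<in>Y. translation_phi_eq \<alpha> \<beta> \<gamma> (p x) (a x) (q y) (b y)"
    and inf_p: "infinite (p ` X)" and inf_q: "infinite (q ` Y)"
  shows "\<alpha> = 0 \<and> \<beta> = 0 \<and> \<gamma> = 0"
proof -
  obtain y1 y2 where y: "y1 \<in> Y" "y2 \<in> Y" "(q y1)\<^sup>2 \<noteq> (q y2)\<^sup>2"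
    using infinite_image_distinct_squares[OF inf_q] by blast
  have eq_y1: "\<forall>x\<in>X. translation_phi_eq \<alpha> \<beta> \<gamma> (p x) (a x) (q y1) (b y1)"
    and eq_y2: "\<forall>x\<in>X. translation_phi_eq \<alpha> \<beta> \<gamma> (p x) (a x) (q y2) (b y2)"
    using eq y by auto
  obtain c0 c2 where quad: "\<forall>x\<in>X. a x = c0 - \<alpha> * p x + c2 * (p x)\<^sup>2"
    using translation_phi_eq_quadratic[OF eq_y1 eq_y2 y(3)] by blast
  have eq_y: "\<forall>x\<in>X. translation_phi_eq \<alpha> \<beta> \<gamma> (p x) (c0 - \<alpha> * p x + c2 * (p x)\<^sup>2) (q y) (b y)"
    if "y \<in> Y" for y
  proof
    fix x assume "x \<in> X"
    then have "translation_phi_eq \<alpha> \<beta> \<gamma> (p x) (a x) (q y) (b y)" using eq that by blast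
    then show "translation_phi_eq \<alpha> \<beta> \<gamma> (p x) (c0 - \<alpha> * p x + c2 * (p x)\<^sup>2) (q y) (b y)"
      using quad \<open>x \<in> X\<close> by simp
  qed
  note coeffs = translation_phi_eq_coefficients[OF eq_y inf_p]
  have alpha: "\<alpha> = 0" using coeffs(1) y(1) .
  have "\<forall>s\<in>q ` Y. (c0 - c2) + 0 * s + (c0 - c2 - \<gamma>) * s\<^sup>2 + \<beta> * s ^ 3 = 0"
  proof
    fix s assume "s \<in> q ` Y"
    then obtain y where y: "y \<in> Y" "q y = s" by blast
    have "(1 + s\<^sup>2) * (c0 - c2) = ((1 + s\<^sup>2) * c0 + b y) - ((1 + s\<^sup>2) * c2 + b y)"
      by (simp add: algebra_simps)
    also have "\<dots> = (1 + s\<^sup>2) * (\<gamma> - \<beta> * s) - (\<gamma> - \<beta> * s)"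
      using coeffs(2,3)[OF y(1)] y(2) by simp
    also have "\<dots> = s\<^sup>2 * (\<gamma> - \<beta> * s)"
      by (simp add: algebra_simps)
    finally have "(1 + s\<^sup>2) * (c0 - c2) = s\<^sup>2 * (\<gamma> - \<beta> * s)" .
    then show "(c0 - c2) + 0 * s + (c0 - c2 - \<gamma>) * s\<^sup>2 + \<beta> * s ^ 3 = 0"
      by (simp add: algebra_simps power2_eq_square power3_eq_cube)
  qed
  from cubic_vanishing_on_infinite_set[OF inf_q this] alpha show ?thesis by simp
qed

theorem theorem4:
  fixes f g :: "real \<Rightarrow> real" and I J :: "real set" and \<alpha> \<beta> \<gamma> :: real
  assumes "open I" "is_interval I" "I \<noteq> {}"
    and "open J" "is_interval J" "J \<noteq> {}"
    and "smooth_on I f" "smooth_on J g"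
    and "(\<alpha>, \<beta>, \<gamma>) \<noteq> (0, 0, 0)"
    and "graph_phi_minimal \<alpha> \<beta> \<gamma> (\<lambda>x y. f x + g y) (I \<times> J)"
  shows "(\<exists>a b. \<forall>x\<in>I. f x = a * x + b) \<or> (\<exists>a b. \<forall>y\<in>J. g y = a * y + b)"
proof (rule ccontr)
  assume not_affine: "\<not> ?thesis"
  have inf_f: "infinite (deriv f ` I)"
    using finite_deriv_image_imp_affine[OF assms(1,2) smooth_on_imp_C1[OF assms(7)]] not_affine
    by blast
  have inf_g: "infinite (deriv g ` J)"
    using finite_deriv_image_imp_affine[OF assms(4,5) smooth_on_imp_C1[OF assms(8)]] not_affine
    by blast
  have "\<forall>x\<in>I. \<forall>y\<in>J. translation_phi_eq \<alpha> \<beta> \<gamma>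
          (deriv f x) (deriv (deriv f) x) (deriv g y) (deriv (deriv g) y)"
    using assms(10) by (auto simp: graph_phi_minimal_def translation_phi_mean_curvature_eq_0_iff)
  then have "\<alpha> = 0 \<and> \<beta> = 0 \<and> \<gamma> = 0"
    by (rule translation_phi_eq_separated[OF _ inf_f inf_g])
  with assms(9) show False by simp
qed

end
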